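(* Let $2\le m<n$, let $g_1,\dots,g_m:\mathbb{R}^n\to\mathbb{R}$ be smooth maps and $c_1,\dots,c_m\in\mathbb{R}$; let $Y=\{p: g_i(p)=c_i,\ 1\le i\le m-1\}$ and $X=\{p\in Y: g_m(p)=c_m\}$. Assume $Y$ is nonempty, bounded and connected, $\nabla g_1(p),\dots,\nabla g_{m-1}(p)$ are linearly independent at every $p\in Y$, and $g_m|_Y$ is a Morse function on $Y$. If $c_m$ equals the global maximum or the global minimum of $g_m|_Y$, then the social choice problem over $X$ has a solution.
   Context: A smooth function on a manifold is a Morse function if its Hessian (in local coordinates) is nonsingular at each of its critical points. For $X\subseteq\mathbb{R}^n$ and $k\ge 2$, a social choice function for $k$ agents over $X$ is a continuous map $F:X^k\to X$ which is anonymous (invariant under permutations of the arguments) and unanimous ($F(p,\dots,p)=p$). "The social choice problem over $X$ has a solution" means that an SCF for $k$ agents over $X$ exists for every $k\ge 2$. *)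

theory Defs
  imports "HOL-Analysis.Analysis"
begin

definition partial :: "(real^'a::finite \<Rightarrow> real) \<Rightarrow> 'a \<Rightarrow> real^'a \<Rightarrow> real" where
  "partial f i x = frechet_derivative f (at x) (axis i 1)"

definition grad :: "(real^'a::finite \<Rightarrow> real) \<Rightarrow> real^'a \<Rightarrow> real^'a" where
  "grad f x = (\<chi> j. partial f j x)"

text \<open>C-infinity on an open set U: differentiable on U and all partial derivatives are again
  C-infinity on U (greatest fixed point = all iterated partial derivatives exist).\<close>
coinductive smooth_on :: "(real^'a::finite) set \<Rightarrow> (real^'a \<Rightarrow> real) \<Rightarrow> bool" for U where
  "(\<forall>x\<in>U. f differentiable (at x)) \<Longrightarrow> (\<forall>i. smooth_on U (\<lambda>x. partial f i x)) \<Longrightarrow> smooth_on U f"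

text \<open>A local parametrization (inverse of a chart / local coordinates) of a subset Y of R^n.\<close>
definition local_param :: "(real^'k::finite \<Rightarrow> real^'n::finite) \<Rightarrow> (real^'k) set \<Rightarrow> (real^'n) set \<Rightarrow> bool" where
  "local_param \<phi> U Y \<longleftrightarrow> open U \<and> (\<forall>j. smooth_on U (\<lambda>u. \<phi> u $ j)) \<and> \<phi> ` U \<subseteq> Y
     \<and> openin (top_of_set Y) (\<phi> ` U) \<and> (\<exists>\<psi>. homeomorphism U (\<phi> ` U) \<phi> \<psi>)
     \<and> (\<forall>u\<in>U. inj (frechet_derivative \<phi> (at u)))"

text \<open>f restricted to Y is a Morse function on Y (Y of dimension CARD('k)): in every local
  coordinate system, at every critical point the Hessian is nonsingular.\<close>
definition morse_on :: "'k::finite itself \<Rightarrow> (real^'n::finite) set \<Rightarrow> (real^'n \<Rightarrow> real) \<Rightarrow> bool" where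
  "morse_on _ Y f \<longleftrightarrow>
     (\<forall>(\<phi>::real^'k \<Rightarrow> real^'n) U u. local_param \<phi> U Y \<and> u \<in> U
        \<and> frechet_derivative (f \<circ> \<phi>) (at u) = (\<lambda>_. 0)
        \<longrightarrow> det (\<chi> i j. partial (\<lambda>v. partial (f \<circ> \<phi>) j v) i u) \<noteq> 0)"

text \<open>Social choice function for k agents over X; profiles in X^k are functions on {..<k}.\<close>
definition social_choice_fun :: "(real^'n::finite) set \<Rightarrow> nat \<Rightarrow> ((nat \<Rightarrow> real^'n) \<Rightarrow> real^'n) \<Rightarrow> bool" where
  "social_choice_fun X k F \<longleftrightarrow>
     continuous_map (subtopology (product_topology (\<lambda>_. euclidean) {..<k}) (PiE {..<k} (\<lambda>_. X)))
                    (top_of_set X) F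
   \<and> (\<forall>x\<in>PiE {..<k} (\<lambda>_. X). \<forall>\<sigma>. \<sigma> permutes {..<k} \<longrightarrow> F (x \<circ> \<sigma>) = F x)
   \<and> (\<forall>p\<in>X. F (\<lambda>i\<in>{..<k}. p) = p)"

definition scf_problem_solvable :: "(real^'n::finite) set \<Rightarrow> bool" where
  "scf_problem_solvable X \<longleftrightarrow> (\<forall>k\<ge>2. \<exists>F. social_choice_fun X k F)"

end

(*
  Let p be a point of X. Since c_m is an extremal value of g_m on Y, in local coordinates of Y
  around p every point of X is a critical point of g_m; by the Morse hypothesis p is a
  nondegenerate critical point, and nondegenerate critical points are isolated. Hence X is
  discrete, and over a discrete set any rule choosing one of the proposed alternatives in a way
  that only depends on the set of proposals is continuous, anonymous and unanimous.

  The local coordinates come from the regular value theorem: the map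
  x \<mapsto> (g_i(x) - c_i)_i + (tangential part of x - p) is a local diffeomorphism straightening Y.
  Most of the work is showing that its local inverse is again smooth.
*)

theory Submission
  imports Defs
begin

section \<open>Smooth functions\<close>

lemma partial_has_derivative: "(f has_derivative f') (at x) \<Longrightarrow> partial f i x = f' (axis i 1)"
  unfolding partial_def using frechet_derivative_at by metis

lemma smooth_on_differentiable: "smooth_on U f \<Longrightarrow> x \<in> U \<Longrightarrow> f differentiable (at x)"
  by (erule smooth_on.cases) auto

lemma smooth_on_partial: "smooth_on U f \<Longrightarrow> smooth_on U (partial f i)"
  by (erule smooth_on.cases) auto

lemma smooth_on_continuous_on: "smooth_on U f \<Longrightarrow> continuous_on U f"
  by (intro continuous_at_imp_continuous_on)
     (use smooth_on_differentiable differentiable_imp_continuous_within in blast)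

lemma smooth_on_subset: "smooth_on U f \<Longrightarrow> V \<subseteq> U \<Longrightarrow> smooth_on V f"
proof (coinduction arbitrary: f rule: smooth_on.coinduct)
  case (smooth_on f)
  then show ?case by (auto elim: smooth_on.cases)
qed

lemma smooth_on_const: "smooth_on U (\<lambda>x. c)"
proof (coinduction arbitrary: c rule: smooth_on.coinduct)
  case (smooth_on c)
  have "partial (\<lambda>x. c) i = (\<lambda>x. 0)" for i
    by (rule ext, rule partial_has_derivative[OF has_derivative_const, simplified])
  then show ?case by auto
qed

lemma smooth_on_linear:
  fixes f :: "real^'a \<Rightarrow> real"
  assumes "bounded_linear f"
  shows "smooth_on V f"
proof (rule smooth_on.intros)
  have D: "(f has_derivative f) (at x)" for x
    using assms by (rule bounded_linear_imp_has_derivative)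
  then show "\<forall>x\<in>V. f differentiable (at x)" unfolding differentiable_def by blast
  have "partial f i = (\<lambda>x. f (axis i 1))" for i using partial_has_derivative[OF D] by auto
  then show "\<forall>i. smooth_on V (partial f i)" by (simp add: smooth_on_const)
qed

lemma linear_eq_sum_axis:
  fixes f :: "real^'a \<Rightarrow> real"
  assumes "linear f"
  shows "f v = (\<Sum>i\<in>UNIV. v$i * f (axis i 1))"
proof -
  have "f v = f (\<Sum>i\<in>UNIV. v$i *s axis i 1)" by (simp add: basis_expansion)
  also have "\<dots> = (\<Sum>i\<in>UNIV. v$i * f (axis i 1))"
    using assms by (simp add: linear_sum linear_scale scalar_mult_eq_scaleR)
  finally show ?thesis .
qed

lemma has_derivative_grad_inner:
  assumes "f differentiable (at x)"
  shows "(f has_derivative (\<lambda>h. grad f x \<bullet> h)) (at x)"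
proof -
  obtain D where D: "(f has_derivative D) (at x)"
    using assms unfolding differentiable_def by blast
  have "D h = grad f x \<bullet> h" for h
    using linear_eq_sum_axis[OF has_derivative_linear[OF D], of h] partial_has_derivative[OF D]
    by (simp add: grad_def inner_vec_def mult.commute)
  with D show ?thesis by (metis ext)
qed

lemma partial_add:
  assumes "f differentiable (at x)" "g differentiable (at x)"
  shows "partial (\<lambda>x. f x + g x) i x = partial f i x + partial g i x"
proof -
  obtain Df Dg where "(f has_derivative Df) (at x)" "(g has_derivative Dg) (at x)"
    using assms unfolding differentiable_def by blast
  from partial_has_derivative[OF has_derivative_add[OF this]]
    partial_has_derivative[OF this(1)] partial_has_derivative[OF this(2)]
  show ?thesis by simp
qed

lemma partial_mult:
  assumes "f differentiable (at x)" "g differentiable (at x)"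
  shows "partial (\<lambda>x. f x * g x) i x = f x * partial g i x + partial f i x * g x"
proof -
  obtain Df Dg where "(f has_derivative Df) (at x)" "(g has_derivative Dg) (at x)"
    using assms unfolding differentiable_def by blast
  from partial_has_derivative[OF has_derivative_mult[OF this]]
    partial_has_derivative[OF this(1)] partial_has_derivative[OF this(2)]
  show ?thesis by simp
qed

text \<open>Closure properties of \<open>smooth_on\<close> are proved coinductively: it suffices that the algebra
  generated by the smooth functions and a family \<open>G\<close> (up to agreement on \<open>V\<close>) is closed
  under partial derivatives.\<close>

inductive smooth_generated :: "(real^'a::finite) set \<Rightarrow> (real^'a \<Rightarrow> real) set \<Rightarrow> (real^'a \<Rightarrow> real) \<Rightarrow> bool"
  for V G where
  smooth: "smooth_on V f \<Longrightarrow> smooth_generated V G f"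
| generator: "f \<in> G \<Longrightarrow> smooth_generated V G f"
| add: "smooth_generated V G a \<Longrightarrow> smooth_generated V G b \<Longrightarrow> smooth_generated V G (\<lambda>x. a x + b x)"
| mult: "smooth_generated V G a \<Longrightarrow> smooth_generated V G b \<Longrightarrow> smooth_generated V G (\<lambda>x. a x * b x)"
| cong: "smooth_generated V G a \<Longrightarrow> (\<forall>x\<in>V. a x = b x) \<Longrightarrow> smooth_generated V G b"

lemma smooth_generated_sum:
  "finite I \<Longrightarrow> (\<And>j. j \<in> I \<Longrightarrow> smooth_generated V G (f j))
    \<Longrightarrow> smooth_generated V G (\<lambda>x. \<Sum>j\<in>I. f j x)"
proof (induction I rule: finite_induct)
  case empty
  then show ?case using smooth_generated.smooth[OF smooth_on_const, of V G 0] by simp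
next
  case (insert j I)
  then show ?case using smooth_generated.add[of V G "f j" "\<lambda>x. \<Sum>j\<in>I. f j x"] by simp
qed

lemma smooth_generated_closed_partial:
  assumes V: "open V"
    and G_differentiable: "\<And>g x. g \<in> G \<Longrightarrow> x \<in> V \<Longrightarrow> g differentiable (at x)"
    and G_partial: "\<And>g i. g \<in> G \<Longrightarrow> smooth_generated V G (partial g i)"
    and "smooth_generated V G f"
  shows "(\<forall>x\<in>V. f differentiable (at x)) \<and> (\<forall>i. smooth_generated V G (partial f i))"
  using assms(4)
proof induction
  case (smooth f)
  then show ?case
    by (auto intro: smooth_on_differentiable smooth_generated.smooth smooth_on_partial)
next
  case (generator f)
  then show ?case using G_differentiable G_partial by auto
next
  case (add a b)
  have "smooth_generated V G (partial (\<lambda>x. a x + b x) i)" for i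
  proof (rule smooth_generated.cong)
    show "smooth_generated V G (\<lambda>x. partial a i x + partial b i x)"
      using add.IH by (intro smooth_generated.add) blast+
    show "\<forall>x\<in>V. partial a i x + partial b i x = partial (\<lambda>x. a x + b x) i x"
      using add.IH by (simp add: partial_add)
  qed
  then show ?case using add.IH by (blast intro: differentiable_add)
next
  case (mult a b)
  have "smooth_generated V G (partial (\<lambda>x. a x * b x) i)" for i
  proof (rule smooth_generated.cong)
    show "smooth_generated V G (\<lambda>x. a x * partial b i x + partial a i x * b x)"
      using mult.IH mult.hyps by (intro smooth_generated.add smooth_generated.mult) blast+
    show "\<forall>x\<in>V. a x * partial b i x + partial a i x * b x = partial (\<lambda>x. a x * b x) i x"
      using mult.IH by (simp add: partial_mult)
  qed
  then show ?case using mult.IH by (blast intro: differentiable_mult)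
next
  case (cong a b)
  have Da: "(a has_derivative frechet_derivative a (at x)) (at x)" if "x \<in> V" for x
    using cong.IH that frechet_derivative_works by blast
  then have Db: "(b has_derivative frechet_derivative a (at x)) (at x)" if "x \<in> V" for x
    using has_derivative_transform_within_open[OF Da V that] cong.hyps(2) that by blast
  have "partial a i x = partial b i x" if "x \<in> V" for i x
    using partial_has_derivative[OF Db[OF that]] by (simp add: partial_def)
  then have "smooth_generated V G (partial b i)" for i
    using cong.IH by (blast intro: smooth_generated.cong)
  then show ?case using Db differentiable_def by blast
qed

lemma smooth_generated_imp_smooth_on:
  assumes "open V"
    and "\<And>g x. g \<in> G \<Longrightarrow> x \<in> V \<Longrightarrow> g differentiable (at x)"
    and "\<And>g i. g \<in> G \<Longrightarrow> smooth_generated V G (partial g i)"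
    and "smooth_generated V G f"
  shows "smooth_on V f"
  using assms(4)
proof (coinduction arbitrary: f rule: smooth_on.coinduct)
  case (smooth_on f)
  then show ?case using smooth_generated_closed_partial[OF assms(1-3)] by blast
qed

lemma smooth_generated_empty_imp_smooth_on: "open V \<Longrightarrow> smooth_generated V {} f \<Longrightarrow> smooth_on V f"
  by (rule smooth_generated_imp_smooth_on) auto

lemma smooth_on_add:
  "open V \<Longrightarrow> smooth_on V a \<Longrightarrow> smooth_on V b \<Longrightarrow> smooth_on V (\<lambda>x. a x + b x)"
  by (erule smooth_generated_empty_imp_smooth_on, rule smooth_generated.add; erule smooth_generated.smooth)

lemma smooth_on_mult:
  "open V \<Longrightarrow> smooth_on V a \<Longrightarrow> smooth_on V b \<Longrightarrow> smooth_on V (\<lambda>x. a x * b x)"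
  by (erule smooth_generated_empty_imp_smooth_on, rule smooth_generated.mult; erule smooth_generated.smooth)

lemma smooth_on_sum:
  "open V \<Longrightarrow> finite I \<Longrightarrow> (\<And>j. j \<in> I \<Longrightarrow> smooth_on V (f j))
    \<Longrightarrow> smooth_on V (\<lambda>x. \<Sum>j\<in>I. f j x)"
  by (erule smooth_generated_empty_imp_smooth_on, rule smooth_generated_sum; simp add: smooth_generated.smooth)

lemma smooth_on_prod:
  assumes "open V" "finite I" "\<And>j. j \<in> I \<Longrightarrow> smooth_on V (f j)"
  shows "smooth_on V (\<lambda>x. \<Prod>j\<in>I. f j x)"
  using assms(2,3)
proof (induction I rule: finite_induct)
  case empty
  then show ?case using smooth_on_const[of V 1] by simp
next
  case (insert j I)
  then show ?case using smooth_on_mult[OF assms(1), of "f j" "\<lambda>x. \<Prod>j\<in>I. f j x"] by simp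
qed

lemma smooth_on_diff:
  "open V \<Longrightarrow> smooth_on V a \<Longrightarrow> smooth_on V b \<Longrightarrow> smooth_on V (\<lambda>x. a x - b x)"
proof -
  assume "open V" "smooth_on V a" "smooth_on V b"
  then have "smooth_on V (\<lambda>x. a x + (- 1) * b x)"
    by (intro smooth_on_add smooth_on_mult smooth_on_const)
  then show ?thesis by simp
qed

lemma smooth_on_det:
  fixes A :: "real^'a \<Rightarrow> real^'n^'n"
  assumes "open V" and "\<And>r c. smooth_on V (\<lambda>x. A x $ r $ c)"
  shows "smooth_on V (\<lambda>x. det (A x))"
  unfolding det_def
  by (intro smooth_on_sum smooth_on_mult smooth_on_const smooth_on_prod assms finite_permutations)
     simp_all

lemma smooth_on_inverse:
  assumes V: "open V" and d: "smooth_on V d" and nz: "\<And>x. x \<in> V \<Longrightarrow> d x \<noteq> 0"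
  shows "smooth_on V (\<lambda>x. inverse (d x))"
proof (rule smooth_generated_imp_smooth_on[OF V, of "{\<lambda>x. inverse (d x)}"])
  let ?G = "{\<lambda>x. inverse (d x)}"
  have D: "((\<lambda>x. inverse (d x)) has_derivative
      (\<lambda>h. - (inverse (d x) * frechet_derivative d (at x) h * inverse (d x)))) (at x)"
    if "x \<in> V" for x
    using Deriv.has_derivative_inverse[of d x, OF nz[OF that]] smooth_on_differentiable[OF d that]
      frechet_derivative_works by blast
  then show "g differentiable (at x)" if "g \<in> ?G" "x \<in> V" for g x
    using that differentiable_def by blast
  show "smooth_generated V ?G (partial g i)" if "g \<in> ?G" for g i
  proof (rule smooth_generated.cong)
    show "smooth_generated V ?G (\<lambda>x. (- 1) * ((inverse (d x) * partial d i x) * inverse (d x)))"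
      by (intro smooth_generated.mult smooth_generated.smooth smooth_on_const
          smooth_on_partial[OF d] smooth_generated.generator) simp_all
    show "\<forall>x\<in>V. (- 1) * ((inverse (d x) * partial d i x) * inverse (d x)) = partial g i x"
      using that partial_has_derivative[OF D] by (simp add: partial_def)
  qed
  show "smooth_generated V ?G (\<lambda>x. inverse (d x))" by (rule smooth_generated.generator) simp
qed

section \<open>Jacobian matrices and the chain rule\<close>

definition jac :: "(real^'a::finite \<Rightarrow> real^'b::finite) \<Rightarrow> real^'a \<Rightarrow> real^'a^'b" where
  "jac \<Phi> x = (\<chi> r c. partial (\<lambda>y. \<Phi> y $ r) c x)"

lemma has_derivative_component:
  "(f has_derivative f') F \<Longrightarrow> ((\<lambda>x. f x $ j) has_derivative (\<lambda>v. f' v $ j)) F"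
  by (rule bounded_linear.has_derivative[OF bounded_linear_vec_nth])

lemma differentiable_iff_components:
  fixes f :: "'a::real_normed_vector \<Rightarrow> real^'b"
  shows "f differentiable (at x) \<longleftrightarrow> (\<forall>j. (\<lambda>x. f x $ j) differentiable (at x))"
proof -
  have "f differentiable (at x) \<longleftrightarrow> (\<forall>i\<in>Basis. (\<lambda>x. f x \<bullet> i) differentiable (at x))"
    by (rule differentiable_componentwise_within)
  also have "\<dots> \<longleftrightarrow> (\<forall>j. (\<lambda>x. f x $ j) differentiable (at x))"
    by (auto simp: Basis_vec_def cart_eq_inner_axis)
  finally show ?thesis .
qed

lemma has_derivative_eq_jac:
  assumes D: "(\<Phi> has_derivative D) (at x)"
  shows "D = (*v) (jac \<Phi> x)"
proof
  fix v
  have "D v $ r = (jac \<Phi> x *v v) $ r" for r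
  proof -
    have "D v $ r = (\<Sum>c\<in>UNIV. v$c * D (axis c 1) $ r)"
      using linear_eq_sum_axis[OF has_derivative_linear[OF has_derivative_component[OF D]], of v]
      by simp
    also have "\<dots> = (\<Sum>c\<in>UNIV. jac \<Phi> x $ r $ c * v $ c)"
      using partial_has_derivative[OF has_derivative_component[OF D]] by (simp add: jac_def mult.commute)
    finally show ?thesis by (simp add: matrix_vector_mult_def)
  qed
  then show "D v = jac \<Phi> x *v v" by (simp add: vec_eq_iff)
qed

lemma has_derivative_jac:
  assumes "\<And>r. (\<lambda>y. \<Phi> y $ r) differentiable (at x)"
  shows "(\<Phi> has_derivative (*v) (jac \<Phi> x)) (at x)"
proof -
  obtain D where "(\<Phi> has_derivative D) (at x)"
    using assms differentiable_iff_components differentiable_def by metis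
  with has_derivative_eq_jac show ?thesis by metis
qed

lemma jac_grad: "jac (grad h) u = transpose (\<chi> i j. partial (partial h j) i u)"
  by (simp add: jac_def grad_def transpose_def)

lemma det_nonzero_iff_inj: "det (A::real^'n^'n) \<noteq> 0 \<longleftrightarrow> inj ((*v) A)"
  using det_nz_iff_inj[OF matrix_vector_mul_linear[of A]] by simp

lemma partial_compose:
  fixes \<Psi> :: "real^'a \<Rightarrow> real^'b" and F :: "real^'b \<Rightarrow> real"
  assumes "\<Psi> differentiable (at x)" "F differentiable (at (\<Psi> x))"
  shows "partial (\<lambda>x. F (\<Psi> x)) i x = (\<Sum>j\<in>UNIV. partial (\<lambda>y. \<Psi> y $ j) i x * partial F j (\<Psi> x))"
proof -
  obtain D where D: "(\<Psi> has_derivative D) (at x)" using assms(1) unfolding differentiable_def by blast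
  obtain DF where DF: "(F has_derivative DF) (at (\<Psi> x))" using assms(2) unfolding differentiable_def by blast
  have "partial (\<lambda>x. F (\<Psi> x)) i x = DF (D (axis i 1))"
    using partial_has_derivative[OF has_derivative_compose[OF D DF]] .
  also have "\<dots> = (\<Sum>j\<in>UNIV. D (axis i 1) $ j * DF (axis j 1))"
    by (rule linear_eq_sum_axis[OF has_derivative_linear[OF DF]])
  also have "\<dots> = (\<Sum>j\<in>UNIV. partial (\<lambda>y. \<Psi> y $ j) i x * partial F j (\<Psi> x))"
    using partial_has_derivative[OF has_derivative_component[OF D]] partial_has_derivative[OF DF] by simp
  finally show ?thesis .
qed

text \<open>The chain rule expresses the partials of \<open>F \<circ> \<Psi>\<close> through the partials of \<open>\<Psi>\<close> and
  functions of the same shape \<open>F' \<circ> \<Psi>\<close>; so it is enough that the partials of \<open>\<Psi>\<close> lie in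
  the algebra generated by those compositions.\<close>

lemma smooth_on_compose_generated:
  fixes \<Psi> :: "real^'a \<Rightarrow> real^'b" and F :: "real^'b \<Rightarrow> real"
  assumes V: "open V" and \<Psi>_differentiable: "\<And>x. x\<in>V \<Longrightarrow> \<Psi> differentiable (at x)"
    and \<Psi>_image: "\<Psi> ` V \<subseteq> W"
    and \<Psi>_partial: "\<And>i j. smooth_generated V {(\<lambda>x. F (\<Psi> x)) | F. smooth_on W F} (partial (\<lambda>y. \<Psi> y $ j) i)"
    and F: "smooth_on W F"
  shows "smooth_on V (\<lambda>x. F (\<Psi> x))"
proof (rule smooth_generated_imp_smooth_on[OF V])
  let ?G = "{(\<lambda>x. F (\<Psi> x)) | F. smooth_on W F}"
  show "smooth_generated V ?G (\<lambda>x. F (\<Psi> x))" using F by (intro smooth_generated.generator) blast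
  have H_differentiable: "H differentiable (at (\<Psi> x))" if "smooth_on W H" "x \<in> V" for H x
    using smooth_on_differentiable[OF that(1)] \<Psi>_image that(2) by blast
  show "g differentiable (at x)" if g_G: "g \<in> ?G" and x: "x \<in> V" for g x
  proof -
    obtain H where g: "g = (\<lambda>x. H (\<Psi> x))" and H: "smooth_on W H" using g_G by blast
    show ?thesis
      using differentiable_chain_at[OF \<Psi>_differentiable[OF x] H_differentiable[OF H x]]
      by (simp add: g o_def)
  qed
  show "smooth_generated V ?G (partial g i)" if g_G: "g \<in> ?G" for g i
  proof -
    obtain H where g: "g = (\<lambda>x. H (\<Psi> x))" and H: "smooth_on W H" using g_G by blast
    show ?thesis
    proof (rule smooth_generated.cong)
      have "smooth_generated V ?G (\<lambda>x. partial H j (\<Psi> x))" for j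
        using smooth_on_partial[OF H] by (intro smooth_generated.generator) blast
      then show "smooth_generated V ?G (\<lambda>x. \<Sum>j\<in>UNIV. partial (\<lambda>y. \<Psi> y $ j) i x * partial H j (\<Psi> x))"
        by (intro smooth_generated_sum smooth_generated.mult \<Psi>_partial) auto
      show "\<forall>x\<in>V. (\<Sum>j\<in>UNIV. partial (\<lambda>y. \<Psi> y $ j) i x * partial H j (\<Psi> x)) = partial g i x"
      proof
        fix x assume "x \<in> V"
        from partial_compose[OF \<Psi>_differentiable[OF this] H_differentiable[OF H this]]
        show "(\<Sum>j\<in>UNIV. partial (\<lambda>y. \<Psi> y $ j) i x * partial H j (\<Psi> x)) = partial g i x"
          by (simp add: g)
      qed
    qed
  qed
qed

lemma smooth_on_compose:
  fixes \<Psi> :: "real^'a \<Rightarrow> real^'b" and F :: "real^'b \<Rightarrow> real"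
  assumes "open V" and \<Psi>: "\<And>j. smooth_on V (\<lambda>x. \<Psi> x $ j)" and "\<Psi> ` V \<subseteq> W"
    and "smooth_on W F"
  shows "smooth_on V (\<lambda>x. F (\<Psi> x))"
proof (rule smooth_on_compose_generated[OF assms(1) _ assms(3) _ assms(4)])
  show "\<Psi> differentiable (at x)" if "x \<in> V" for x
    using smooth_on_differentiable[OF \<Psi> that] by (simp add: differentiable_iff_components)
  show "smooth_generated V {(\<lambda>x. F (\<Psi> x)) | F. smooth_on W F} (partial (\<lambda>y. \<Psi> y $ j) i)" for i j
    using smooth_on_partial[OF \<Psi>] by (rule smooth_generated.smooth)
qed

section \<open>The inverse function theorem for smooth maps\<close>

lemma partial_local_inverse:
  fixes \<Phi> \<Psi> :: "real^'n \<Rightarrow> real^'n"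
  assumes V: "open V" and y: "y \<in> V" and \<Phi>_\<Psi>: "\<And>y. y \<in> V \<Longrightarrow> \<Phi> (\<Psi> y) = y"
    and \<Psi>: "\<Psi> differentiable (at y)" and \<Phi>: "\<Phi> differentiable (at (\<Psi> y))"
    and det_jac: "det (jac \<Phi> (\<Psi> y)) \<noteq> 0"
  shows "partial (\<lambda>y. \<Psi> y $ j) i y
    = det (\<chi> r c. if c = j then axis i 1 $ r else jac \<Phi> (\<Psi> y) $ r $ c) * inverse (det (jac \<Phi> (\<Psi> y)))"
proof -
  obtain D where D: "(\<Psi> has_derivative D) (at y)"
    using \<Psi> unfolding differentiable_def by blast
  obtain D\<Phi> where D\<Phi>: "(\<Phi> has_derivative D\<Phi>) (at (\<Psi> y))"
    using \<Phi> unfolding differentiable_def by blast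
  have "((\<lambda>z. \<Phi> (\<Psi> z)) has_derivative (\<lambda>v. v)) (at y)"
    by (rule has_derivative_transform_within_open[OF has_derivative_ident V y]) (simp add: \<Phi>_\<Psi>)
  then have "(\<lambda>v. D\<Phi> (D v)) = (\<lambda>v. v)"
    using has_derivative_unique[OF has_derivative_compose[OF D D\<Phi>]] by blast
  then have jac_D: "jac \<Phi> (\<Psi> y) *v D (axis i 1) = axis i 1"
    using has_derivative_eq_jac[OF D\<Phi>] by metis
  have "det (\<chi> r c. if c = j then axis i 1 $ r else jac \<Phi> (\<Psi> y) $ r $ c)
      = D (axis i 1) $ j * det (jac \<Phi> (\<Psi> y))"
    using cramer_lemma[of j "jac \<Phi> (\<Psi> y)" "D (axis i 1)"] unfolding jac_D .
  then show ?thesis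
    using partial_has_derivative[OF has_derivative_component[OF D]] det_jac by simp
qed

text \<open>The partials of \<open>\<Psi>\<close> are smooth functions of \<open>\<Psi>\<close> itself.\<close>

lemma smooth_on_local_inverse:
  fixes \<Phi> \<Psi> :: "real^'n \<Rightarrow> real^'n"
  assumes V: "open V" and W: "open W" and \<Psi>_image: "\<Psi> ` V \<subseteq> W"
    and \<Phi>: "\<And>j. smooth_on W (\<lambda>x. \<Phi> x $ j)"
    and \<Phi>_\<Psi>: "\<And>y. y \<in> V \<Longrightarrow> \<Phi> (\<Psi> y) = y"
    and \<Psi>_differentiable: "\<And>y. y \<in> V \<Longrightarrow> \<Psi> differentiable (at y)"
    and det_jac: "\<And>x. x \<in> W \<Longrightarrow> det (jac \<Phi> x) \<noteq> 0"
  shows "smooth_on V (\<lambda>y. \<Psi> y $ k)"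
proof -
  let ?G = "{(\<lambda>x. F (\<Psi> x)) | F. smooth_on W F}"
  define E where "E j i x = det (\<chi> r c. if c = j then axis i 1 $ r else jac \<Phi> x $ r $ c)
      * inverse (det (jac \<Phi> x))" for j i :: 'n and x
  have jac_smooth: "smooth_on W (\<lambda>x. jac \<Phi> x $ r $ c)" for r c
    by (simp add: jac_def smooth_on_partial \<Phi>)
  have "smooth_on W (\<lambda>x. if c = j then axis i 1 $ r else jac \<Phi> x $ r $ c)" for r c j i
    by (cases "c = j") (simp_all add: jac_smooth smooth_on_const)
  then have E_smooth: "smooth_on W (E j i)" for j i
    unfolding E_def
    by (intro smooth_on_mult[OF W] smooth_on_inverse[OF W] smooth_on_det[OF W] det_jac)
       (simp_all add: jac_smooth)
  have partial_\<Psi>: "partial (\<lambda>y. \<Psi> y $ j) i y = E j i (\<Psi> y)" if y: "y \<in> V" for i j y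
  proof -
    have "\<Phi> differentiable (at (\<Psi> y))"
      using \<Psi>_image y smooth_on_differentiable[OF \<Phi>]
      by (simp add: differentiable_iff_components image_subset_iff)
    then show ?thesis
      using partial_local_inverse[OF V y \<Phi>_\<Psi> \<Psi>_differentiable[OF y]] det_jac \<Psi>_image y
      unfolding E_def by blast
  qed
  have "smooth_on V (\<lambda>y. (\<lambda>x. x $ k) (\<Psi> y))"
  proof (rule smooth_on_compose_generated[OF V \<Psi>_differentiable \<Psi>_image])
    show "smooth_on W (\<lambda>x. x $ k)" by (rule smooth_on_linear[OF bounded_linear_vec_nth])
    show "smooth_generated V ?G (partial (\<lambda>y. \<Psi> y $ j) i)" for i j
    proof (rule smooth_generated.cong)
      show "smooth_generated V ?G (\<lambda>y. E j i (\<Psi> y))"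
        using E_smooth by (intro smooth_generated.generator) blast
      show "\<forall>y\<in>V. E j i (\<Psi> y) = partial (\<lambda>y. \<Psi> y $ j) i y" using partial_\<Psi> by simp
    qed
  qed
  then show ?thesis by simp
qed

lemma continuous_on_blinfun_jac:
  fixes \<Phi> :: "real^'a \<Rightarrow> real^'b"
  assumes \<Phi>: "\<And>j. smooth_on U (\<lambda>x. \<Phi> x $ j)"
  shows "continuous_on U (\<lambda>x. Blinfun ((*v) (jac \<Phi> x)))"
proof (rule continuous_on_blinfun_componentwise)
  fix b :: "real^'a" assume "b \<in> Basis"
  then obtain c where b: "b = axis c 1" by (auto simp: Basis_vec_def)
  have "continuous_on U (\<lambda>x. partial (\<lambda>y. \<Phi> y $ r) c x)" for r
    using smooth_on_continuous_on[OF smooth_on_partial[OF \<Phi>]] .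
  then show "continuous_on U (\<lambda>x. Blinfun ((*v) (jac \<Phi> x)) b)"
    by (simp add: bounded_linear_Blinfun_apply b matrix_vector_mult_basis column_def jac_def
        continuous_on_vec_lambda)
qed

lemma smooth_inverse_function_theorem:
  fixes \<Phi> :: "real^'n \<Rightarrow> real^'n"
  assumes \<Phi>: "\<And>j. smooth_on UNIV (\<lambda>x. \<Phi> x $ j)" and det_jac: "det (jac \<Phi> p) \<noteq> 0"
  obtains U V \<Psi> \<Psi>' where "open U" "p \<in> U" "open V" "homeomorphism U V \<Phi> \<Psi>"
    "\<And>j. smooth_on V (\<lambda>y. \<Psi> y $ j)"
    "\<And>y. y \<in> V \<Longrightarrow> (\<Psi> has_derivative \<Psi>' y) (at y)" "\<And>y. y \<in> V \<Longrightarrow> inj (\<Psi>' y)"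
proof -
  define \<Phi>' where "\<Phi>' x = Blinfun ((*v) (jac \<Phi> x))" for x
  have \<Phi>'_apply: "blinfun_apply (\<Phi>' x) = (*v) (jac \<Phi> x)" for x
    unfolding \<Phi>'_def by (simp add: bounded_linear_Blinfun_apply)
  have D\<Phi>: "(\<Phi> has_derivative blinfun_apply (\<Phi>' x)) (at x)" if "x \<in> UNIV" for x
    unfolding \<Phi>'_apply using smooth_on_differentiable[OF \<Phi>] by (intro has_derivative_jac) blast
  have \<Phi>'_continuous: "continuous_on UNIV \<Phi>'"
    unfolding \<Phi>'_def by (rule continuous_on_blinfun_jac[OF \<Phi>])
  obtain B where B: "B ** jac \<Phi> p = mat 1"
    using det_jac invertible_det_nz invertible_left_inverse by blast
  have "Blinfun ((*v) B) o\<^sub>L \<Phi>' p = id_blinfun"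
    by (rule blinfun_eqI) (simp add: \<Phi>'_apply bounded_linear_Blinfun_apply matrix_vector_mul_assoc B)
  then obtain U V \<Psi> \<Psi>' where UV: "open U" "p \<in> U" "open V" and hom: "homeomorphism U V \<Phi> \<Psi>"
    and D\<Psi>: "\<And>y. y \<in> V \<Longrightarrow> (\<Psi> has_derivative \<Psi>' y) (at y)"
    and \<Psi>': "\<And>y. y \<in> V \<Longrightarrow> \<Psi>' y = inv ((*v) (jac \<Phi> (\<Psi> y)))"
    and bij: "\<And>y. y \<in> V \<Longrightarrow> bij ((*v) (jac \<Phi> (\<Psi> y)))"
    using inverse_function_theorem[OF open_UNIV D\<Phi> \<Phi>'_continuous UNIV_I] unfolding \<Phi>'_apply by metis
  have \<Psi>_\<Phi>: "\<And>x. x \<in> U \<Longrightarrow> \<Psi> (\<Phi> x) = x" and \<Phi>_image: "\<Phi> ` U = V"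
    and \<Phi>_\<Psi>: "\<And>y. y \<in> V \<Longrightarrow> \<Phi> (\<Psi> y) = y" and \<Psi>_image: "\<Psi> ` V = U"
    using hom unfolding homeomorphism_def by auto
  have "det (jac \<Phi> x) \<noteq> 0" if "x \<in> U" for x
    using bij[of "\<Phi> x"] \<Phi>_image \<Psi>_\<Phi> that by (auto simp: det_nonzero_iff_inj bij_is_inj)
  moreover have "\<Psi> differentiable (at y)" if "y \<in> V" for y
    using D\<Psi>[OF that] differentiable_def by blast
  ultimately have "smooth_on V (\<lambda>y. \<Psi> y $ j)" for j
    using \<Psi>_image \<Phi>_\<Psi>
    by (intro smooth_on_local_inverse[OF UV(3,1) _ smooth_on_subset[OF \<Phi>]]) auto
  moreover have "inj (\<Psi>' y)" if "y \<in> V" for y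
    using \<Psi>'[OF that] bij[OF that] by (simp add: bij_imp_bij_inv bij_is_inj)
  ultimately show ?thesis using that UV hom D\<Psi> by blast
qed

section \<open>Local parametrizations of regular level sets\<close>

lemma combination_independent_imp_independent:
  fixes v :: "nat \<Rightarrow> real^'n"
  assumes I: "finite I" and ind: "\<forall>a. (\<Sum>i\<in>I. a i *\<^sub>R v i) = 0 \<longrightarrow> (\<forall>i\<in>I. a i = 0)"
  shows "inj_on v I" "independent (v ` I)"
proof -
  show inj: "inj_on v I"
  proof (rule inj_onI, rule ccontr)
    fix i j assume ij: "i \<in> I" "j \<in> I" "v i = v j" "i \<noteq> j"
    define a where "a l = (if l = i then 1 else 0) - (if l = j then (1::real) else 0)" for l
    have "(\<Sum>l\<in>I. a l *\<^sub>R v l) = (\<Sum>l\<in>I. (if l = i then v l else 0) - (if l = j then v l else 0))"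
      by (rule sum.cong) (auto simp: a_def)
    also have "\<dots> = 0" using ij I by (simp add: sum_subtractf)
    finally have "a i = 0" using ind ij by blast
    then show False using ij unfolding a_def by simp
  qed
  show "independent (v ` I)"
  proof
    assume "dependent (v ` I)"
    then obtain u where u: "\<exists>w\<in>v ` I. u w \<noteq> 0" "(\<Sum>w\<in>v ` I. u w *\<^sub>R w) = 0"
      using real_vector.dependent_finite[of "v ` I"] I by blast
    have "(\<Sum>i\<in>I. u (v i) *\<^sub>R v i) = 0" using u(2) by (simp add: sum.reindex[OF inj])
    then have "\<forall>i\<in>I. u (v i) = 0" using ind[rule_format, of "\<lambda>i. u (v i)"] by blast
    then show False using u(1) by blast
  qed
qed

lemma orthogonal_complement_parametrization:
  fixes v :: "nat \<Rightarrow> real^'n"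
  assumes I: "finite I" and ind: "\<forall>a. (\<Sum>i\<in>I. a i *\<^sub>R v i) = 0 \<longrightarrow> (\<forall>i\<in>I. a i = 0)"
    and card: "CARD('k) + card I = CARD('n)"
  obtains L :: "real^'k \<Rightarrow> real^'n" and R
  where "linear L" "linear R" "\<And>u. R (L u) = u" "range L = {y. \<forall>i\<in>I. v i \<bullet> y = 0}"
proof -
  define T where "T = {y. \<forall>x\<in>span (v ` I). orthogonal x y}"
  have T_eq: "T = {y. \<forall>i\<in>I. v i \<bullet> y = 0}"
  proof (rule set_eqI, rule iffI)
    fix y assume "y \<in> T"
    then show "y \<in> {y. \<forall>i\<in>I. v i \<bullet> y = 0}"
      unfolding T_def orthogonal_def by (auto intro: span_base)
  next
    fix y assume "y \<in> {y. \<forall>i\<in>I. v i \<bullet> y = 0}"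
    then have "orthogonal y x" if "x \<in> span (v ` I)" for x
      by (intro orthogonal_to_span[OF that]) (auto simp: orthogonal_def inner_commute)
    then show "y \<in> T" unfolding T_def by (simp add: orthogonal_commute)
  qed
  have "dim T + dim (span (v ` I)) = dim (UNIV :: (real^'n) set)"
    using dim_subspace_orthogonal_to_vectors[of "span (v ` I)" UNIV] unfolding T_def by simp
  moreover have "dim (span (v ` I)) = card I"
    using combination_independent_imp_independent[OF I ind]
    by (simp add: dim_span dim_eq_card_independent card_image)
  ultimately have "dim (UNIV :: (real^'k) set) = dim T" using card by simp
  moreover have "subspace T" unfolding T_def by (rule subspace_orthogonal_to_vectors)
  ultimately obtain L :: "real^'k \<Rightarrow> real^'n" and R where "linear L" "linear R" "L ` UNIV = T"
      "\<And>x. x \<in> UNIV \<Longrightarrow> R (L x) = x"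
    using isometries_subspaces[OF subspace_UNIV] by metis
  then show ?thesis using that unfolding T_eq by blast
qed

lemma combination_orthogonal_imp_zero:
  fixes v :: "nat \<Rightarrow> real^'n"
  assumes "finite I" and ind: "\<forall>a. (\<Sum>i\<in>I. a i *\<^sub>R v i) = 0 \<longrightarrow> (\<forall>i\<in>I. a i = 0)"
    and orthogonal: "\<forall>i\<in>I. v i \<bullet> (\<Sum>i\<in>I. a i *\<^sub>R v i) = 0"
  shows "\<forall>i\<in>I. a i = 0"
proof -
  let ?w = "\<Sum>i\<in>I. a i *\<^sub>R v i"
  have "?w \<bullet> ?w = (\<Sum>i\<in>I. a i * (v i \<bullet> ?w))" by (simp add: inner_sum_left)
  also have "\<dots> = 0" using orthogonal by simp
  finally show ?thesis using ind by simp
qed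

lemma local_param_straightening:
  fixes L :: "real^'k::finite \<Rightarrow> real^'n::finite"
  assumes L: "linear L" and R: "linear R" and R_L: "\<And>u. R (L u) = u"
    and W: "open W" and V: "open V" and hom: "homeomorphism W V \<Phi> \<Psi>"
    and \<Psi>_smooth: "\<And>j. smooth_on V (\<lambda>y. \<Psi> y $ j)"
    and D\<Psi>: "\<And>y. y \<in> V \<Longrightarrow> (\<Psi> has_derivative \<Psi>' y) (at y)"
    and D\<Psi>_inj: "\<And>y. y \<in> V \<Longrightarrow> inj (\<Psi>' y)"
    and straight: "\<And>x. x \<in> W \<Longrightarrow> x \<in> Y \<longleftrightarrow> \<Phi> x \<in> range L"
  shows "local_param (\<lambda>u. \<Psi> (L u)) (L -` V) Y"
proof -
  have \<Psi>_\<Phi>: "\<And>x. x \<in> W \<Longrightarrow> \<Psi> (\<Phi> x) = x" and \<Phi>_image: "\<Phi> ` W = V"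
    and \<Phi>_\<Psi>: "\<And>y. y \<in> V \<Longrightarrow> \<Phi> (\<Psi> y) = y" and \<Psi>_image: "\<Psi> ` V = W"
    and \<Phi>_continuous: "continuous_on W \<Phi>" and \<Psi>_continuous: "continuous_on V \<Psi>"
    using hom unfolding homeomorphism_def by auto
  have bounded_L: "bounded_linear L" and bounded_R: "bounded_linear R"
    using L R linear_conv_bounded_linear by auto
  have U: "open (L -` V)"
    by (rule continuous_open_vimage[OF V]) (simp add: linear_continuous_at[OF bounded_L])
  have image: "(\<lambda>u. \<Psi> (L u)) ` (L -` V) = Y \<inter> W"
  proof
    show "(\<lambda>u. \<Psi> (L u)) ` (L -` V) \<subseteq> Y \<inter> W"
      using straight \<Phi>_\<Psi> \<Psi>_image by auto
    show "Y \<inter> W \<subseteq> (\<lambda>u. \<Psi> (L u)) ` (L -` V)"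
    proof
      fix x assume x: "x \<in> Y \<inter> W"
      then obtain u where "\<Phi> x = L u" using straight by blast
      then show "x \<in> (\<lambda>u. \<Psi> (L u)) ` (L -` V)"
        using x \<Phi>_image \<Psi>_\<Phi> by (metis IntD2 image_eqI vimageI2 imageI)
    qed
  qed
  have L_R_\<Phi>: "L (R (\<Phi> x)) = \<Phi> x" if "x \<in> Y \<inter> W" for x
    using that straight R_L by auto
  have "homeomorphism (L -` V) (Y \<inter> W) (\<lambda>u. \<Psi> (L u)) (\<lambda>x. R (\<Phi> x))"
  proof (rule homeomorphismI)
    show "continuous_on (L -` V) (\<lambda>u. \<Psi> (L u))"
      by (rule continuous_on_compose2[OF \<Psi>_continuous linear_continuous_on[OF bounded_L]]) auto
    show "continuous_on (Y \<inter> W) (\<lambda>x. R (\<Phi> x))"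
      by (rule continuous_on_compose2[OF linear_continuous_on[OF bounded_R]
            continuous_on_subset[OF \<Phi>_continuous]]) auto
    show "(\<lambda>x. R (\<Phi> x)) ` (Y \<inter> W) \<subseteq> L -` V"
      using L_R_\<Phi> \<Phi>_image by auto
    show "R (\<Phi> (\<Psi> (L u))) = u" if "u \<in> L -` V" for u
      using that \<Phi>_\<Psi> R_L by simp
    show "\<Psi> (L (R (\<Phi> x))) = x" if "x \<in> Y \<inter> W" for x
      using that L_R_\<Phi> \<Psi>_\<Phi> by simp
  qed (use image in auto)
  moreover have "inj (frechet_derivative (\<lambda>u. \<Psi> (L u)) (at u))" if "u \<in> L -` V" for u
  proof -
    have "((\<lambda>u. \<Psi> (L u)) has_derivative (\<lambda>h. \<Psi>' (L u) (L h))) (at u)"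
      using has_derivative_compose[OF bounded_linear_imp_has_derivative[OF bounded_L] D\<Psi>] that
      by simp
    then have "frechet_derivative (\<lambda>u. \<Psi> (L u)) (at u) = (\<lambda>h. \<Psi>' (L u) (L h))"
      using frechet_derivative_at by metis
    moreover have "inj L" by (metis R_L injI)
    ultimately show ?thesis using D\<Psi>_inj that by (simp add: inj_def)
  qed
  moreover have "smooth_on (L -` V) (\<lambda>u. \<Psi> (L u) $ j)" for j
    by (rule smooth_on_compose[OF U _ _ \<Psi>_smooth])
       (auto intro: smooth_on_linear bounded_linear_compose[OF bounded_linear_vec_nth bounded_L])
  ultimately show ?thesis
    unfolding local_param_def image using U W by (auto intro: openin_open_Int)
qed

lemma combination_plus_range_iff:
  fixes v :: "nat \<Rightarrow> real^'n" and L :: "real^'k \<Rightarrow> real^'n"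
  assumes I: "finite I" and ind: "\<forall>a. (\<Sum>i\<in>I. a i *\<^sub>R v i) = 0 \<longrightarrow> (\<forall>i\<in>I. a i = 0)"
    and range_L: "range L = {y. \<forall>i\<in>I. v i \<bullet> y = 0}"
  shows "(\<Sum>i\<in>I. a i *\<^sub>R v i) + L u \<in> range L \<longleftrightarrow> (\<forall>i\<in>I. a i = 0)"
proof
  assume "(\<Sum>i\<in>I. a i *\<^sub>R v i) + L u \<in> range L"
  moreover have "L u \<in> range L" by simp
  ultimately have "\<forall>i\<in>I. v i \<bullet> ((\<Sum>i\<in>I. a i *\<^sub>R v i) + L u) = 0" "\<forall>i\<in>I. v i \<bullet> L u = 0"
    using range_L by auto
  then have "\<forall>i\<in>I. v i \<bullet> (\<Sum>i\<in>I. a i *\<^sub>R v i) = 0"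
    by (simp add: inner_add_right)
  then show "\<forall>i\<in>I. a i = 0" by (rule combination_orthogonal_imp_zero[OF I ind])
qed simp

lemma inj_combination_plus_complement:
  fixes v :: "nat \<Rightarrow> real^'n" and L :: "real^'k \<Rightarrow> real^'n"
  assumes I: "finite I" and ind: "\<forall>a. (\<Sum>i\<in>I. a i *\<^sub>R v i) = 0 \<longrightarrow> (\<forall>i\<in>I. a i = 0)"
    and L: "linear L" and R: "linear R" and R_L: "\<And>u. R (L u) = u"
    and range_L: "range L = {y. \<forall>i\<in>I. v i \<bullet> y = 0}"
  shows "inj (\<lambda>h. (\<Sum>i\<in>I. (v i \<bullet> h) *\<^sub>R v i) + L (R h))"
proof -
  have "linear (\<lambda>h. (\<Sum>i\<in>I. (v i \<bullet> h) *\<^sub>R v i) + L (R h))"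
    by (rule linearI)
       (simp_all add: inner_add_right scaleR_add_left sum.distrib linear_add[OF R] linear_add[OF L]
         linear_scale[OF R] linear_scale[OF L] scaleR_sum_right algebra_simps)
  moreover have "h = 0" if h: "(\<Sum>i\<in>I. (v i \<bullet> h) *\<^sub>R v i) + L (R h) = 0" for h
  proof -
    let ?w = "\<Sum>i\<in>I. (v i \<bullet> h) *\<^sub>R v i"
    have "?w = L (R (- h))" using h linear_neg[OF R] linear_neg[OF L]
      by (simp add: add_eq_0_iff)
    then have "\<forall>i\<in>I. v i \<bullet> ?w = 0" using range_L by auto
    then have "\<forall>i\<in>I. v i \<bullet> h = 0"
      by (rule combination_orthogonal_imp_zero[OF I ind])
    moreover from this have "h \<in> range L" using range_L by simp
    then have "L (R h) = h" using R_L by auto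
    ultimately show "h = 0" using h by simp
  qed
  ultimately show ?thesis using linear_injective_0 by blast
qed

text \<open>Straighten the level set near \<open>p\<close> by the map whose normal components are \<open>g\<^sub>i - c\<^sub>i\<close>
  and whose tangential component is the orthogonal projection onto \<open>range L\<close>.\<close>

lemma regular_level_set_local_param:
  fixes g :: "nat \<Rightarrow> real^'n::finite \<Rightarrow> real" and p :: "real^'n"
  assumes I: "finite I" and card: "CARD('k::finite) + card I = CARD('n)"
    and g: "\<forall>i\<in>I. smooth_on UNIV (g i)" and p: "\<forall>i\<in>I. g i p = c i"
    and ind: "\<forall>a. (\<Sum>i\<in>I. a i *\<^sub>R grad (g i) p) = 0 \<longrightarrow> (\<forall>i\<in>I. a i = 0)"
  obtains \<phi> :: "real^'k \<Rightarrow> real^'n" and U u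
  where "local_param \<phi> U {x. \<forall>i\<in>I. g i x = c i}" "u \<in> U" "\<phi> u = p"
proof -
  define v where "v i = grad (g i) p" for i
  have ind_v: "\<forall>a. (\<Sum>i\<in>I. a i *\<^sub>R v i) = 0 \<longrightarrow> (\<forall>i\<in>I. a i = 0)"
    using ind by (simp add: v_def)
  obtain L :: "real^'k \<Rightarrow> real^'n" and R where L: "linear L" and R: "linear R"
    and R_L: "\<And>u. R (L u) = u" and range_L: "range L = {y. \<forall>i\<in>I. v i \<bullet> y = 0}"
    using orthogonal_complement_parametrization[OF I ind_v card] by blast
  have bounded_LR: "bounded_linear (\<lambda>x. L (R x))"
    using L R by (simp add: linear_conv_bounded_linear bounded_linear_compose[unfolded o_def])
  define \<Phi> where "\<Phi> x = (\<Sum>i\<in>I. (g i x - c i) *\<^sub>R v i) + L (R (x - p))" for x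
  have \<Phi>_smooth: "smooth_on UNIV (\<lambda>x. \<Phi> x $ j)" for j
  proof -
    have \<Phi>_j: "(\<lambda>x. \<Phi> x $ j) = (\<lambda>x. (\<Sum>i\<in>I. (g i x - c i) * v i $ j) + (L (R x) $ j - L (R p) $ j))"
      by (rule ext) (simp add: \<Phi>_def linear_diff[OF R] linear_diff[OF L])
    have "bounded_linear (\<lambda>x. L (R x) $ j)"
      using bounded_linear_compose[OF bounded_linear_vec_nth bounded_LR] by (simp add: o_def)
    then show ?thesis unfolding \<Phi>_j
      by (intro smooth_on_add smooth_on_sum smooth_on_mult smooth_on_diff smooth_on_const)
         (use g I smooth_on_linear in auto)
  qed
  define D where "D h = (\<Sum>i\<in>I. (v i \<bullet> h) *\<^sub>R v i) + L (R h)" for h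
  have D\<Phi>: "(\<Phi> has_derivative D) (at p)"
    unfolding \<Phi>_def D_def v_def using g I
    by (auto intro!: derivative_eq_intros has_derivative_grad_inner smooth_on_differentiable
        bounded_linear.has_derivative[OF bounded_LR])
  moreover have "inj D"
    unfolding D_def by (rule inj_combination_plus_complement[OF I ind_v L R R_L range_L])
  ultimately have "det (jac \<Phi> p) \<noteq> 0"
    using has_derivative_eq_jac det_nonzero_iff_inj by metis
  then obtain W V \<Psi> \<Psi>' where WV: "open W" "p \<in> W" "open V" and hom: "homeomorphism W V \<Phi> \<Psi>"
    and \<Psi>: "\<And>j. smooth_on V (\<lambda>y. \<Psi> y $ j)"
    and D\<Psi>: "\<And>y. y \<in> V \<Longrightarrow> (\<Psi> has_derivative \<Psi>' y) (at y)" "\<And>y. y \<in> V \<Longrightarrow> inj (\<Psi>' y)"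
    using smooth_inverse_function_theorem[OF \<Phi>_smooth] by metis
  have "x \<in> {x. \<forall>i\<in>I. g i x = c i} \<longleftrightarrow> \<Phi> x \<in> range L" for x
    using combination_plus_range_iff[OF I ind_v range_L, of "\<lambda>i. g i x - c i"]
    by (simp add: \<Phi>_def)
  then have "local_param (\<lambda>u. \<Psi> (L u)) (L -` V) {x. \<forall>i\<in>I. g i x = c i}"
    using local_param_straightening[OF L R R_L WV(1,3) hom \<Psi> D\<Psi>] by blast
  moreover have "\<Phi> p = L 0"
    using p L R by (simp add: \<Phi>_def linear_0)
  then have "0 \<in> L -` V" "\<Psi> (L 0) = p"
    using hom WV(2) unfolding homeomorphism_def by force+
  ultimately show ?thesis by (rule that)
qed

section \<open>Nondegenerate extrema are isolated\<close>

lemma has_derivative_inj_isolated_zero: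
  fixes G :: "'a::real_normed_vector \<Rightarrow> 'b::euclidean_space"
  assumes D: "(G has_derivative G') (at u0)" and inj: "inj G'" and G0: "G u0 = 0"
  obtains d where "d > 0" "\<And>u. u \<in> ball u0 d \<Longrightarrow> G u = 0 \<Longrightarrow> u = u0"
proof -
  obtain B where B: "B > 0" "\<And>v. B * norm v \<le> norm (G' v)"
    using linear_inj_bounded_below_pos[OF has_derivative_linear[OF D] inj] by blast
  obtain d where d: "d > 0"
    "\<And>u. norm (u - u0) < d \<Longrightarrow> norm (G u - G u0 - G' (u - u0)) \<le> B/2 * norm (u - u0)"
    using D B(1) unfolding has_derivative_at_alt by (metis half_gt_zero)
  show thesis
  proof (rule that[OF d(1)])
    fix u assume u: "u \<in> ball u0 d" "G u = 0"
    have "B * norm (u - u0) \<le> B/2 * norm (u - u0)"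
      using B(2)[of "u - u0"] d(2)[of u] u G0 by (simp add: dist_norm norm_minus_commute)
    then have "norm (u - u0) \<le> 0" using B(1) by (simp add: mult_le_cancel_right)
    then show "u = u0" by simp
  qed
qed

lemma nondegenerate_critical_point_isolated:
  fixes h :: "real^'k \<Rightarrow> real"
  assumes h: "smooth_on U h" and "u0 \<in> U" "grad h u0 = 0"
    and nondegenerate: "det (\<chi> i j. partial (partial h j) i u0) \<noteq> 0"
  obtains d where "d > 0" "\<And>u. u \<in> ball u0 d \<Longrightarrow> grad h u = 0 \<Longrightarrow> u = u0"
proof (rule has_derivative_inj_isolated_zero)
  show "(grad h has_derivative (*v) (jac (grad h) u0)) (at u0)"
    using smooth_on_differentiable[OF smooth_on_partial[OF h] \<open>u0 \<in> U\<close>]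
    by (intro has_derivative_jac) (simp add: grad_def)
  show "inj ((*v) (jac (grad h) u0))"
    using nondegenerate by (simp add: jac_grad det_transpose flip: det_nonzero_iff_inj)
qed (use assms that in auto)

lemma local_param_isolated_in:
  assumes lp: "local_param \<phi> U Y" and u0: "u0 \<in> U" "\<phi> u0 = p"
    and S: "p \<in> S" "S \<subseteq> Y"
    and d: "d > 0" "\<And>u. u \<in> U \<Longrightarrow> u \<in> ball u0 d \<Longrightarrow> \<phi> u \<in> S \<Longrightarrow> u = u0"
  shows "p isolated_in S"
proof -
  obtain \<psi> where hom: "homeomorphism U (\<phi> ` U) \<phi> \<psi>"
    and \<phi>_open: "openin (top_of_set Y) (\<phi> ` U)"
    using lp unfolding local_param_def by auto
  have "openin (top_of_set Y) (\<phi> ` (U \<inter> ball u0 d))"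
    using homeomorphism_imp_open_map[OF hom openin_open_Int[OF open_ball]] \<phi>_open openin_trans
    by blast
  then obtain Q where Q: "open Q" "\<phi> ` (U \<inter> ball u0 d) = Y \<inter> Q" unfolding openin_open by blast
  have "p \<in> \<phi> ` (U \<inter> ball u0 d)" using u0 d(1) by (metis IntI centre_in_ball image_eqI)
  then have p: "p \<in> Y \<inter> Q" unfolding Q(2) .
  show ?thesis
  proof (rule isolated_inI[OF S(1) Q(1)])
    show "Q \<inter> S = {p}"
    proof
      show "{p} \<subseteq> Q \<inter> S" using p S(1) by simp
      show "Q \<inter> S \<subseteq> {p}"
      proof
        fix x assume x: "x \<in> Q \<inter> S"
        then have "x \<in> \<phi> ` (U \<inter> ball u0 d)" unfolding Q(2) using S(2) by blast
        then obtain u where u: "u \<in> U" "u \<in> ball u0 d" "x = \<phi> u" by auto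
        then show "x \<in> {p}" using d(2) x u0(2) by auto
      qed
    qed
  qed
qed

lemma local_param_isolated_extremum:
  fixes \<phi> :: "real^'k \<Rightarrow> real^'n" and f :: "real^'n \<Rightarrow> real"
  assumes lp: "local_param \<phi> U Y" and u0: "u0 \<in> U" "\<phi> u0 = p"
    and f: "smooth_on UNIV f" and morse: "morse_on TYPE('k) Y f"
    and extremum: "(\<forall>y\<in>Y. f y \<le> f p) \<or> (\<forall>y\<in>Y. f p \<le> f y)"
  shows "p isolated_in {x \<in> Y. f x = f p}"
proof -
  have U: "open U" and \<phi>: "\<And>j. smooth_on U (\<lambda>u. \<phi> u $ j)" and \<phi>_Y: "\<phi> ` U \<subseteq> Y"
    using lp unfolding local_param_def by auto
  have h: "smooth_on U (f \<circ> \<phi>)"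
    unfolding o_def by (rule smooth_on_compose[OF U \<phi> _ f]) simp
  have critical: "frechet_derivative (f \<circ> \<phi>) (at u) = (\<lambda>_. 0)" if "u \<in> U" "f (\<phi> u) = f p" for u
  proof (rule differential_zero_maxmin[OF that(1) U])
    show "((f \<circ> \<phi>) has_derivative frechet_derivative (f \<circ> \<phi>) (at u)) (at u)"
      using smooth_on_differentiable[OF h that(1)] frechet_derivative_works by blast
    show "(\<forall>w\<in>U. (f \<circ> \<phi>) w \<le> (f \<circ> \<phi>) u) \<or> (\<forall>w\<in>U. (f \<circ> \<phi>) u \<le> (f \<circ> \<phi>) w)"
      using extremum \<phi>_Y that by auto
  qed
  then have grad_zero: "grad (f \<circ> \<phi>) u = 0" if "u \<in> U" "f (\<phi> u) = f p" for u
    using that by (simp add: grad_def partial_def vec_eq_iff)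
  have "det (\<chi> i j. partial (partial (f \<circ> \<phi>) j) i u0) \<noteq> 0"
    using morse lp u0 critical[OF u0(1)] unfolding morse_on_def by blast
  then obtain d where d: "d > 0" "\<And>u. u \<in> ball u0 d \<Longrightarrow> grad (f \<circ> \<phi>) u = 0 \<Longrightarrow> u = u0"
    using nondegenerate_critical_point_isolated[OF h u0(1) grad_zero[OF u0(1)]] u0(2) by blast
  show ?thesis
    using u0 d(1) d(2)[OF _ grad_zero] lp
    by (intro local_param_isolated_in[of \<phi> U Y u0]) (auto simp: local_param_def)
qed

section \<open>Social choice over discrete sets\<close>

lemma subtopology_product_discrete:
  fixes X :: "'a::topological_space set"
  assumes I: "finite I" and X: "discrete X"
  shows "subtopology (product_topology (\<lambda>_. euclidean) I) (PiE I (\<lambda>_. X))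
    = discrete_topology (PiE I (\<lambda>_. X))"
proof (subst eq_commute, rule discrete_topology_unique[THEN iffD2], intro conjI ballI)
  show "topspace (subtopology (product_topology (\<lambda>_. euclidean) I) (PiE I (\<lambda>_. X)))
      = PiE I (\<lambda>_. X)"
    by auto
  fix x assume x: "x \<in> PiE I (\<lambda>_. X)"
  then have "\<forall>i\<in>I. \<exists>Q. open Q \<and> Q \<inter> X = {x i}"
    using X by (auto simp: discrete_def isolated_in_def)
  then obtain Q where Q: "\<And>i. i \<in> I \<Longrightarrow> open (Q i) \<and> Q i \<inter> X = {x i}" by metis
  have "openin (product_topology (\<lambda>_. euclidean) I) (PiE I Q)"
    using I Q by (auto simp: openin_PiE_gen)
  moreover have "PiE I Q \<inter> PiE I (\<lambda>_. X) = {x}"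
    using Q x by (simp add: PiE_Int PiE_singleton PiE_iff cong: PiE_cong)
  ultimately show "openin (subtopology (product_topology (\<lambda>_. euclidean) I) (PiE I (\<lambda>_. X))) {x}"
    unfolding openin_subtopology by blast
qed

text \<open>On a discrete set every map is continuous, so choosing one of the proposed alternatives
  (which depends only on the set of proposals) is a social choice function.\<close>

lemma scf_problem_solvable_discrete:
  fixes X :: "(real^'n) set"
  assumes "discrete X"
  shows "scf_problem_solvable X"
  unfolding scf_problem_solvable_def
proof (intro allI impI)
  fix k :: nat assume k: "2 \<le> k"
  define F where "F x = (SOME q. q \<in> x ` {..<k})" for x :: "nat \<Rightarrow> real^'n"
  have "F x \<in> X" if "x \<in> PiE {..<k} (\<lambda>_. X)" for x
  proof -
    have "x 0 \<in> x ` {..<k}" using k by auto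
    then have "F x \<in> x ` {..<k}" unfolding F_def by (rule someI)
    then show ?thesis using that by (auto simp: PiE_iff)
  qed
  then have "continuous_map (subtopology (product_topology (\<lambda>_. euclidean) {..<k})
      (PiE {..<k} (\<lambda>_. X))) (top_of_set X) F"
    by (simp add: subtopology_product_discrete[OF finite_lessThan assms] Pi_iff)
  moreover have "F (x \<circ> \<sigma>) = F x" if "\<sigma> permutes {..<k}" for x \<sigma>
  proof -
    have "(x \<circ> \<sigma>) ` {..<k} = x ` {..<k}" using that by (metis image_comp permutes_image)
    then show ?thesis by (simp add: F_def)
  qed
  moreover have "F (\<lambda>i\<in>{..<k}. p) = p" for p
  proof -
    have "(\<lambda>i\<in>{..<k}. p) ` {..<k} = {p}" using k by (auto intro!: image_eqI[where x=0])
    then show ?thesis by (simp add: F_def)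
  qed
  ultimately show "\<exists>F. social_choice_fun X k F"
    unfolding social_choice_fun_def by blast
qed

theorem proposition11:
  fixes g :: "nat \<Rightarrow> real^'n::finite \<Rightarrow> real" and c :: "nat \<Rightarrow> real" and m :: nat
    and Y X :: "(real^'n) set"
  assumes "2 \<le> m" and "m < CARD('n)"
    and "CARD('k::finite) = CARD('n) - (m - 1)"
    and "\<forall>i\<in>{1..m}. smooth_on UNIV (g i)"
    and "Y = {p. \<forall>i\<in>{1..m-1}. g i p = c i}"
    and "X = {p\<in>Y. g m p = c m}"
    and "Y \<noteq> {}" and "bounded Y" and "connected Y"
    and "\<forall>p\<in>Y. \<forall>a. (\<Sum>i=1..m-1. a i *\<^sub>R grad (g i) p) = 0 \<longrightarrow> (\<forall>i\<in>{1..m-1}. a i = 0)"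
    and "morse_on TYPE('k) Y (g m)"
    and "((\<forall>p\<in>Y. g m p \<le> c m) \<and> (\<exists>q\<in>Y. g m q = c m))
       \<or> ((\<forall>p\<in>Y. c m \<le> g m p) \<and> (\<exists>q\<in>Y. g m q = c m))"
  shows "scf_problem_solvable X"
proof (rule scf_problem_solvable_discrete, rule discreteI)
  fix p assume "p \<in> X"
  then have p: "p \<in> Y" "g m p = c m" using assms(6) by auto
  have "CARD('k) + card {1..m-1} = CARD('n)" using assms(2,3) by simp
  moreover have "\<forall>i\<in>{1..m-1}. smooth_on UNIV (g i)" using assms(4) by auto
  moreover have "\<forall>i\<in>{1..m-1}. g i p = c i" using assms(5) p(1) by auto
  moreover have "\<forall>a. (\<Sum>i\<in>{1..m-1}. a i *\<^sub>R grad (g i) p) = 0 \<longrightarrow> (\<forall>i\<in>{1..m-1}. a i = 0)"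
    using assms(10) p(1) by blast
  ultimately obtain \<phi> :: "real^'k \<Rightarrow> real^'n" and U u
    where \<phi>: "local_param \<phi> U Y" "u \<in> U" "\<phi> u = p"
    unfolding assms(5) by (rule regular_level_set_local_param[OF finite_atLeastAtMost])
  have "p isolated_in {x \<in> Y. g m x = g m p}"
    using local_param_isolated_extremum[OF \<phi> _ assms(11)] assms(1,4,12) p(2) by auto
  then show "p isolated_in X" using assms(6) p(2) by simp
qed

end
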